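(* For the iterates of SONATA with step-size $\alpha\in(0,1]$ under Assumptions (A), (B), (C), (W), and assuming $D_{\max}>0$, for every $\nu\ge0$: $$\alpha\|d^\nu\|^2\ge\frac{\mu}{D_{\max}^2}\Big(p^{\nu+1}-(1-\alpha)p^\nu-\frac\alpha\mu\|\delta^\nu\|^2\Big).$$
   Context: Problem (P): minimize $U=F+G$ over $\mathcal K$, $F=\frac1m\sum_{i=1}^mf_i$. (A): $\mathcal K\subseteq\mathbb R^d$ nonempty closed convex; $f_i$ twice differentiable convex on open $\mathcal O\supseteq\mathcal K$; $\mu I\preceq\nabla^2F\preceq LI$ on $\mathcal K$ ($\mu>0$, $L<\infty$); $G$ convex on $\mathcal K$; $x^\star$ unique minimizer, $U^\star=U(x^\star)$. (B): connected undirected graph on $\{1,\dots,m\}$, edges $\mathcal E$. (W): $w_{ii}>0$; for $i\ne j$, $w_{ij}>0$ iff $(i,j)\in\mathcal E$, else 0; $W$ doubly stochastic. (C): $\tilde f_i:\mathcal O\times\mathcal O\to\mathbb R$ $C^2$, $\nabla\tilde f_i(x;x)=\nabla f_i(x)$, $\nabla\tilde f_i(\cdot;x)$ Lipschitz, $\tilde f_i(\cdot;x)$ strongly convex on $\mathcal K$ for all $x\in\mathcal K$; constants $D_i^\ell\le D_i^u$ with $D_i^\ell I\preceq\nabla^2\tilde f_i(x;y)-\nabla^2F(x)\preceq D_i^uI$ on $\mathcal K\times\mathcal K$; $D_{\max}=\max_i\max\{|D_i^\ell|,|D_i^u|\}$. SONATA: $x_i^0\in\mathcal K$, $y_i^0=\nabla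 f_i(x_i^0)$; $\hat x_i^\nu=\arg\min_{x_i\in\mathcal K}\tilde f_i(x_i;x_i^\nu)+(y_i^\nu-\nabla f_i(x_i^\nu))^\top(x_i-x_i^\nu)+G(x_i)$; $d_i^\nu=\hat x_i^\nu-x_i^\nu$; $x_i^{\nu+1/2}=x_i^\nu+\alpha d_i^\nu$; $x_i^{\nu+1}=\sum_jw_{ij}x_j^{\nu+1/2}$; $y_i^{\nu+1}=\sum_jw_{ij}(y_j^\nu+\nabla f_j(x_j^{\nu+1})-\nabla f_j(x_j^\nu))$. $d^\nu$ and $\delta^\nu$ stack $d_i^\nu$ and $\delta_i^\nu=\nabla F(x_i^\nu)-y_i^\nu$; $p^\nu=\sum_i(U(x_i^\nu)-U^\star)$. *)

theory Defs
  imports "HOL-Analysis.Analysis"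
begin

definition strongly_convex_on :: "'a::real_normed_vector set \<Rightarrow> ('a \<Rightarrow> real) \<Rightarrow> bool" where
  "strongly_convex_on S f \<longleftrightarrow> (\<exists>c>0. \<forall>x\<in>S. \<forall>y\<in>S. \<forall>t::real. 0 \<le> t \<and> t \<le> 1 \<longrightarrow>
      f (t *\<^sub>R x + (1 - t) *\<^sub>R y) \<le> t * f x + (1 - t) * f y - c / 2 * t * (1 - t) * (norm (x - y))\<^sup>2)"

definition C2_on :: "'b::euclidean_space set \<Rightarrow> ('b \<Rightarrow> real) \<Rightarrow> bool" where
  "C2_on S g \<longleftrightarrow> (\<exists>(g' :: 'b \<Rightarrow> ('b \<Rightarrow>\<^sub>L real)) (g'' :: 'b \<Rightarrow> ('b \<Rightarrow>\<^sub>L ('b \<Rightarrow>\<^sub>L real))).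
      (\<forall>z\<in>S. (g has_derivative blinfun_apply (g' z)) (at z)) \<and>
      (\<forall>z\<in>S. (g' has_derivative blinfun_apply (g'' z)) (at z)) \<and>
      continuous_on S g'')"

end

theory Submission
  imports Defs
begin

text \<open>Each agent's surrogate minimizer is nearly optimal for U = F + G. Its first-order
  optimality condition, the strong convexity of F and a mean-value bound on the gap between the
  surrogate gradient and the gradient of F (whose Hessian lies in [Dl i, Du i]) give
  U(xhat i) - U(xstar) \<le> (Dmax^2 |d i|^2 + |\<delta> i|^2) / \<mu>. The next iterates are doubly stochastic
  averages of the convex combinations (1 - \<alpha>) x i + \<alpha> xhat i, so convexity of U (Jensen, once
  for each average) yields p(\<nu>+1) \<le> (1 - \<alpha>) p(\<nu>) + \<alpha> \<Sum>i (U(xhat i) - U(xstar)), and the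
  per-agent bound finishes the estimate.\<close>

lemma has_real_derivative_along_line:
  fixes g :: "'a::real_normed_vector \<Rightarrow> real"
  assumes "(g has_derivative g') (at (a + t *\<^sub>R b))"
  shows "((\<lambda>s. g (a + s *\<^sub>R b)) has_real_derivative g' b) (at t)"
proof -
  have line: "((\<lambda>s. a + s *\<^sub>R b) has_derivative (\<lambda>s. s *\<^sub>R b)) (at t)"
    by (auto intro!: derivative_eq_intros)
  have "((\<lambda>s. g (a + s *\<^sub>R b)) has_derivative (\<lambda>s. g' (s *\<^sub>R b))) (at t)"
    by (rule has_derivative_compose[OF line]) (use assms in simp)
  moreover have "linear g'"
    using assms has_derivative_linear by blast
  then have "(\<lambda>s. g' (s *\<^sub>R b)) = (*) (g' b)"
    by (simp add: fun_eq_iff linear_scale)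
  ultimately show ?thesis
    unfolding has_field_derivative_def by simp
qed

lemma DERIV_ge_of_increments_ge:
  fixes \<phi> :: "real \<Rightarrow> real"
  assumes "(\<phi> has_real_derivative D) (at 0)"
    and "\<And>t. 0 < t \<Longrightarrow> t \<le> 1 \<Longrightarrow> t * A \<le> \<phi> t - \<phi> 0"
  shows "A \<le> D"
proof -
  have "((\<lambda>t. (\<phi> t - \<phi> 0) / (t - 0)) \<longlongrightarrow> D) (at 0)"
    using assms(1) has_field_derivative_iff by blast
  then have lim: "((\<lambda>t. (\<phi> t - \<phi> 0) / (t - 0)) \<longlongrightarrow> D) (at_right 0)"
    by (rule filterlim_mono) (auto simp: at_le)
  have "eventually (\<lambda>t. A \<le> (\<phi> t - \<phi> 0) / (t - 0)) (at_right (0::real))"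
    unfolding eventually_at_right[OF zero_less_one]
    using assms(2) by (intro exI[of _ 1]) (auto simp: field_simps)
  with lim show ?thesis
    by (rule tendsto_lowerbound) simp
qed

lemma DERIV2_ge_imp_quadratic_lower_bound:
  fixes \<phi> \<phi>' \<phi>'' :: "real \<Rightarrow> real"
  assumes d1: "\<And>t. 0 \<le> t \<Longrightarrow> t \<le> 1 \<Longrightarrow> (\<phi> has_real_derivative \<phi>' t) (at t)"
    and d2: "\<And>t. 0 \<le> t \<Longrightarrow> t \<le> 1 \<Longrightarrow> (\<phi>' has_real_derivative \<phi>'' t) (at t)"
    and k: "\<And>t. 0 \<le> t \<Longrightarrow> t \<le> 1 \<Longrightarrow> k \<le> \<phi>'' t"
  shows "\<phi> 0 + \<phi>' 0 + k / 2 \<le> \<phi> 1"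
proof -
  have slope: "\<phi>' 0 + k * t \<le> \<phi>' t" if "0 \<le> t" "t \<le> 1" for t
  proof -
    have "\<phi>' 0 - k * 0 \<le> \<phi>' t - k * t"
    proof (rule DERIV_nonneg_imp_nondecreasing[OF that(1)])
      fix s assume "0 \<le> s" "s \<le> t"
      then show "\<exists>y. ((\<lambda>t. \<phi>' t - k * t) has_real_derivative y) (at s) \<and> 0 \<le> y"
        using that d2[of s] k[of s]
        by (intro exI[of _ "\<phi>'' s - k"]) (auto intro!: derivative_eq_intros)
    qed
    then show ?thesis by simp
  qed
  have "\<phi> 0 - 0 * \<phi>' 0 - k / 2 * 0\<^sup>2 \<le> \<phi> 1 - 1 * \<phi>' 0 - k / 2 * 1\<^sup>2"
  proof (rule DERIV_nonneg_imp_nondecreasing[of 0 1 "\<lambda>t. \<phi> t - t * \<phi>' 0 - k / 2 * t\<^sup>2"])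
    fix s :: real assume "0 \<le> s" "s \<le> 1"
    then show "\<exists>y. ((\<lambda>t. \<phi> t - t * \<phi>' 0 - k / 2 * t\<^sup>2) has_real_derivative y) (at s) \<and> 0 \<le> y"
      using d1[of s] slope[of s]
      by (intro exI[of _ "\<phi>' s - \<phi>' 0 - k * s"]) (auto intro!: derivative_eq_intros)
  qed simp
  then show ?thesis by simp
qed

lemma polarization_bound:
  fixes H :: "'a::real_inner \<Rightarrow> 'a"
  assumes lin: "linear H" and sym: "\<And>u w. u \<bullet> H w = w \<bullet> H u"
    and bd: "\<And>h. \<bar>h \<bullet> H h\<bar> \<le> D * (norm h)\<^sup>2"
  shows "a \<bullet> H b \<le> D / 2 * ((norm a)\<^sup>2 + (norm b)\<^sup>2)"
proof -
  have plus: "(a + b) \<bullet> H (a + b) = a \<bullet> H a + 2 * (a \<bullet> H b) + b \<bullet> H b"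
    using sym[of b a] by (simp add: linear_add[OF lin] inner_add_left inner_add_right)
  have minus: "(a - b) \<bullet> H (a - b) = a \<bullet> H a - 2 * (a \<bullet> H b) + b \<bullet> H b"
    using sym[of b a] by (simp add: linear_diff[OF lin] inner_diff_left inner_diff_right)
  have parallelogram: "(norm (a + b))\<^sup>2 + (norm (a - b))\<^sup>2 = 2 * ((norm a)\<^sup>2 + (norm b)\<^sup>2)"
    by (simp add: power2_norm_eq_inner algebra_simps inner_commute)
  have "4 * (a \<bullet> H b) = (a + b) \<bullet> H (a + b) - (a - b) \<bullet> H (a - b)"
    using plus minus by simp
  also have "\<dots> \<le> D * ((norm (a + b))\<^sup>2 + (norm (a - b))\<^sup>2)"
    using bd[of "a + b"] bd[of "a - b"] by (simp add: algebra_simps)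
  finally show ?thesis
    unfolding parallelogram by (simp add: algebra_simps)
qed

lemma polarization_bound_scaled:
  fixes H :: "'a::real_inner \<Rightarrow> 'a"
  assumes lin: "linear H" and sym: "\<And>u w. u \<bullet> H w = w \<bullet> H u"
    and bd: "\<And>h. \<bar>h \<bullet> H h\<bar> \<le> D * (norm h)\<^sup>2" and s: "0 < s"
  shows "a \<bullet> H b \<le> D / 2 * (s * (norm a)\<^sup>2 + (norm b)\<^sup>2 / s)"
proof -
  have "a \<bullet> H b = (sqrt s *\<^sub>R a) \<bullet> H ((1 / sqrt s) *\<^sub>R b)"
    using s by (simp add: linear_scale[OF lin])
  also have "\<dots> \<le> D / 2 * ((norm (sqrt s *\<^sub>R a))\<^sup>2 + (norm ((1 / sqrt s) *\<^sub>R b))\<^sup>2)"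
    by (rule polarization_bound[OF lin sym bd])
  also have "\<dots> = D / 2 * (s * (norm a)\<^sup>2 + (norm b)\<^sup>2 / s)"
    using s by (simp add: power_mult_distrib power_divide)
  finally show ?thesis .
qed

lemma inner_le_young:
  fixes a b :: "'a::real_inner"
  assumes "0 < s"
  shows "a \<bullet> b \<le> s / 2 * (norm a)\<^sup>2 + (norm b)\<^sup>2 / (2 * s)"
proof -
  have "a \<bullet> id b \<le> 1 / 2 * (s * (norm a)\<^sup>2 + (norm b)\<^sup>2 / s)"
    using assms by (intro polarization_bound_scaled[OF linear_id]) (auto simp: inner_commute power2_norm_eq_inner)
  then show ?thesis
    by (simp add: field_simps)
qed

lemma second_difference_approx:
  fixes q :: "'a::real_inner \<Rightarrow> real" and g H :: "'a \<Rightarrow> 'a"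
  assumes lin: "linear H" and s: "0 < s" and r: "s * (norm a + norm b) \<le> r"
    and dq: "\<And>y. norm (y - z) \<le> r \<Longrightarrow> (q has_derivative (\<lambda>h. g y \<bullet> h)) (at y)"
    and approx: "\<And>y. norm (y - z) \<le> r \<Longrightarrow> norm (g y - g z - H (y - z)) \<le> \<epsilon> * r"
  shows "\<bar>q (z + s *\<^sub>R b + s *\<^sub>R a) - q (z + s *\<^sub>R a) - q (z + s *\<^sub>R b) + q z - s\<^sup>2 * (a \<bullet> H b)\<bar>
    \<le> 2 * \<epsilon> * s * r * norm a"
proof -
  define \<phi> where "\<phi> \<tau> = q (z + s *\<^sub>R b + \<tau> *\<^sub>R a) - q (z + \<tau> *\<^sub>R a)" for \<tau>
  define \<phi>' where "\<phi>' \<tau> = (g (z + s *\<^sub>R b + \<tau> *\<^sub>R a) - g (z + \<tau> *\<^sub>R a)) \<bullet> a" for \<tau>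
  have near: "norm ((z + c *\<^sub>R b + \<tau> *\<^sub>R a) - z) \<le> r"
    if "0 \<le> \<tau>" "\<tau> \<le> s" "0 \<le> c" "c \<le> s" for c \<tau>
  proof -
    have "norm (c *\<^sub>R b + \<tau> *\<^sub>R a) \<le> c * norm b + \<tau> * norm a"
      using that norm_triangle_ineq[of "c *\<^sub>R b" "\<tau> *\<^sub>R a"] by simp
    also have "\<dots> \<le> r"
      using r that mult_right_mono[of c s "norm b"] mult_right_mono[of \<tau> s "norm a"]
      by (simp add: distrib_left)
    finally show ?thesis by simp
  qed
  have "(\<phi> has_real_derivative \<phi>' \<tau>) (at \<tau>)" if "0 \<le> \<tau>" "\<tau> \<le> s" for \<tau>
  proof -
    have "((\<lambda>\<sigma>. q ((z + s *\<^sub>R b) + \<sigma> *\<^sub>R a)) has_real_derivative g (z + s *\<^sub>R b + \<tau> *\<^sub>R a) \<bullet> a) (at \<tau>)"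
      using near[of \<tau> s] that s by (intro has_real_derivative_along_line dq) simp
    moreover have "((\<lambda>\<sigma>. q (z + \<sigma> *\<^sub>R a)) has_real_derivative g (z + \<tau> *\<^sub>R a) \<bullet> a) (at \<tau>)"
      using near[of \<tau> 0] that s by (intro has_real_derivative_along_line dq) simp
    ultimately show ?thesis
      unfolding \<phi>_def \<phi>'_def using DERIV_diff by (fastforce simp: inner_diff_left add.assoc)
  qed
  then obtain \<xi> where \<xi>: "0 < \<xi>" "\<xi> < s" and mvt: "\<phi> s - \<phi> 0 = (s - 0) * \<phi>' \<xi>"
    using MVT2[OF s, of \<phi> \<phi>'] by auto
  define p1 where "p1 = z + s *\<^sub>R b + \<xi> *\<^sub>R a"
  define p2 where "p2 = z + \<xi> *\<^sub>R a"
  define e1 where "e1 = g p1 - g z - H (p1 - z)"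
  define e2 where "e2 = g p2 - g z - H (p2 - z)"
  have "H (p1 - z) - H (p2 - z) = s *\<^sub>R H b"
    by (simp add: p1_def p2_def linear_add[OF lin] linear_scale[OF lin])
  then have "\<phi>' \<xi> - s * (a \<bullet> H b) = (e1 - e2) \<bullet> a"
    by (simp add: \<phi>'_def e1_def e2_def p1_def p2_def algebra_simps inner_commute)
  then have "\<bar>\<phi>' \<xi> - s * (a \<bullet> H b)\<bar> \<le> norm (e1 - e2) * norm a"
    using Cauchy_Schwarz_ineq2 by simp
  also have "\<dots> \<le> (2 * \<epsilon> * r) * norm a"
  proof (rule mult_right_mono)
    have "norm e1 \<le> \<epsilon> * r"
      unfolding e1_def by (rule approx) (use near[of \<xi> s] \<xi> in \<open>simp add: p1_def\<close>)
    moreover have "norm e2 \<le> \<epsilon> * r"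
      unfolding e2_def by (rule approx) (use near[of \<xi> 0] \<xi> in \<open>simp add: p2_def\<close>)
    ultimately show "norm (e1 - e2) \<le> 2 * \<epsilon> * r"
      using norm_triangle_ineq4[of e1 e2] by linarith
  qed simp
  finally have "\<bar>\<phi>' \<xi> - s * (a \<bullet> H b)\<bar> \<le> 2 * \<epsilon> * r * norm a" .
  moreover have "q (z + s *\<^sub>R b + s *\<^sub>R a) - q (z + s *\<^sub>R a) - q (z + s *\<^sub>R b) + q z - s\<^sup>2 * (a \<bullet> H b)
      = s * (\<phi>' \<xi> - s * (a \<bullet> H b))"
    using mvt by (simp add: \<phi>_def power2_eq_square algebra_simps)
  ultimately show ?thesis
    using s by (simp add: abs_mult power2_eq_square mult_left_mono mult.assoc mult.left_commute)
qed

text \<open>Only Frechet differentiability of g at z is needed: the second difference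
  q (z + s a + s b) - q (z + s a) - q (z + s b) + q z is symmetric in a and b and approximates
  both s^2 (a \<bullet> H b) and s^2 (b \<bullet> H a).\<close>

lemma hessian_antisymmetric_part_le:
  fixes q :: "'a::real_inner \<Rightarrow> real" and g H :: "'a \<Rightarrow> 'a"
  assumes S: "open S" "z \<in> S"
    and dq: "\<And>y. y \<in> S \<Longrightarrow> (q has_derivative (\<lambda>h. g y \<bullet> h)) (at y)"
    and dg: "(g has_derivative H) (at z)" and \<epsilon>: "0 < \<epsilon>"
  shows "\<bar>a \<bullet> H b - b \<bullet> H a\<bar> \<le> \<epsilon> * (2 * (norm a + norm b) * (norm a + norm b + 1))"
proof -
  have lin: "linear H"
    using dg has_derivative_linear by blast
  obtain d where d: "0 < d"
    and dd: "\<And>y. norm (y - z) < d \<Longrightarrow> norm (g y - g z - H (y - z)) \<le> \<epsilon> * norm (y - z)"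
    using dg \<epsilon> unfolding has_derivative_at_alt by blast
  obtain \<rho> where \<rho>: "0 < \<rho>" "ball z \<rho> \<subseteq> S"
    using S openE by blast
  define r where "r = min d \<rho> / 2"
  define s where "s = r / (norm a + norm b + 1)"
  have r: "0 < r" "r < d" "r < \<rho>"
    using d \<rho> by (auto simp: r_def)
  have s: "0 < s"
    using r by (simp add: s_def add_nonneg_pos)
  have "norm a + norm b + 1 \<noteq> 0"
    using norm_ge_zero[of a] norm_ge_zero[of b] by linarith
  then have rs: "r = s * (norm a + norm b + 1)"
    by (simp add: s_def)
  then have sr: "s * (norm a + norm b) \<le> r"
    using s by (simp add: distrib_left)
  have dq': "(q has_derivative (\<lambda>h. g y \<bullet> h)) (at y)" if "norm (y - z) \<le> r" for y
    using that r \<rho> by (intro dq) (auto simp: dist_norm norm_minus_commute subset_iff)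
  have approx: "norm (g y - g z - H (y - z)) \<le> \<epsilon> * r" if "norm (y - z) \<le> r" for y
  proof -
    have "norm (g y - g z - H (y - z)) \<le> \<epsilon> * norm (y - z)"
      using that r by (intro dd) simp
    also have "\<dots> \<le> \<epsilon> * r"
      using that \<epsilon> by (simp add: mult_left_mono)
    finally show ?thesis .
  qed
  have ab: "\<bar>q (z + s *\<^sub>R b + s *\<^sub>R a) - q (z + s *\<^sub>R a) - q (z + s *\<^sub>R b) + q z - s\<^sup>2 * (a \<bullet> H b)\<bar>
      \<le> 2 * \<epsilon> * s * r * norm a"
    by (rule second_difference_approx[OF lin s sr dq' approx])
  have ba: "\<bar>q (z + s *\<^sub>R a + s *\<^sub>R b) - q (z + s *\<^sub>R b) - q (z + s *\<^sub>R a) + q z - s\<^sup>2 * (b \<bullet> H a)\<bar>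
      \<le> 2 * \<epsilon> * s * r * norm b"
    by (rule second_difference_approx[OF lin s _ dq' approx]) (use sr in \<open>simp add: add.commute\<close>)
  have swap: "z + s *\<^sub>R a + s *\<^sub>R b = z + s *\<^sub>R b + s *\<^sub>R a"
    by (simp add: algebra_simps)
  have "s\<^sup>2 * \<bar>a \<bullet> H b - b \<bullet> H a\<bar> = \<bar>s\<^sup>2 * (a \<bullet> H b) - s\<^sup>2 * (b \<bullet> H a)\<bar>"
    by (simp add: abs_mult flip: right_diff_distrib)
  also have "\<dots> \<le> 2 * \<epsilon> * s * r * norm a + 2 * \<epsilon> * s * r * norm b"
    using ab ba unfolding swap by linarith
  also have "\<dots> = s\<^sup>2 * (\<epsilon> * (2 * (norm a + norm b) * (norm a + norm b + 1)))"
    by (simp add: rs power2_eq_square algebra_simps)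
  finally show ?thesis
    using s by simp
qed

lemma hessian_symmetric:
  fixes q :: "'a::real_inner \<Rightarrow> real" and g H :: "'a \<Rightarrow> 'a"
  assumes S: "open S" "z \<in> S"
    and dq: "\<And>y. y \<in> S \<Longrightarrow> (q has_derivative (\<lambda>h. g y \<bullet> h)) (at y)"
    and dg: "(g has_derivative H) (at z)"
  shows "a \<bullet> H b = b \<bullet> H a"
proof -
  define C where "C = 2 * (norm a + norm b) * (norm a + norm b + 1)"
  have C: "0 \<le> C"
    by (simp add: C_def)
  have "\<bar>a \<bullet> H b - b \<bullet> H a\<bar> \<le> 0"
  proof (rule field_le_epsilon)
    fix e :: real assume e: "0 < e"
    then have "0 < e / (C + 1)"
      using C by simp
    then have "\<bar>a \<bullet> H b - b \<bullet> H a\<bar> \<le> e / (C + 1) * C"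
      using hessian_antisymmetric_part_le[OF S dq dg, of "e / (C + 1)" a b] by (simp only: C_def)
    also have "\<dots> \<le> e"
      using e C by (simp add: field_simps)
    finally show "\<bar>a \<bullet> H b - b \<bullet> H a\<bar> \<le> 0 + e"
      by simp
  qed
  then show ?thesis
    by simp
qed

lemma convexD_line:
  assumes "convex K" "a \<in> K" "b \<in> K" "0 \<le> t" "t \<le> 1"
  shows "a + t *\<^sub>R (b - a) \<in> K"
  using convexD_alt[OF assms] by (simp add: algebra_simps)

lemma hessian_ge_imp_quadratic_lower_bound:
  fixes F :: "'a::real_inner \<Rightarrow> real" and gF :: "'a \<Rightarrow> 'a" and HF :: "'a \<Rightarrow> 'a \<Rightarrow> 'a"
  assumes line: "\<And>t. 0 \<le> t \<Longrightarrow> t \<le> 1 \<Longrightarrow> a + t *\<^sub>R (b - a) \<in> S"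
    and dF: "\<And>z. z \<in> S \<Longrightarrow> (F has_derivative (\<lambda>h. gF z \<bullet> h)) (at z)"
    and dgF: "\<And>z. z \<in> S \<Longrightarrow> (gF has_derivative HF z) (at z)"
    and hess: "\<And>z h. z \<in> S \<Longrightarrow> \<mu> * (norm h)\<^sup>2 \<le> h \<bullet> HF z h"
  shows "F a + gF a \<bullet> (b - a) + \<mu> / 2 * (norm (b - a))\<^sup>2 \<le> F b"
proof -
  define v where "v = b - a"
  have "F (a + 0 *\<^sub>R v) + gF (a + 0 *\<^sub>R v) \<bullet> v + \<mu> * (norm v)\<^sup>2 / 2 \<le> F (a + 1 *\<^sub>R v)"
  proof (rule DERIV2_ge_imp_quadratic_lower_bound)
    fix t :: real assume t: "0 \<le> t" "t \<le> 1"
    then have p: "a + t *\<^sub>R v \<in> S"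
      using line by (simp add: v_def)
    show "((\<lambda>t. F (a + t *\<^sub>R v)) has_real_derivative gF (a + t *\<^sub>R v) \<bullet> v) (at t)"
      using dF[OF p] by (rule has_real_derivative_along_line)
    have "((\<lambda>u. gF u \<bullet> v) has_derivative (\<lambda>h. HF (a + t *\<^sub>R v) h \<bullet> v)) (at (a + t *\<^sub>R v))"
      using dgF[OF p] by (auto intro!: derivative_eq_intros)
    then show "((\<lambda>t. gF (a + t *\<^sub>R v) \<bullet> v) has_real_derivative HF (a + t *\<^sub>R v) v \<bullet> v) (at t)"
      by (rule has_real_derivative_along_line)
    show "\<mu> * (norm v)\<^sup>2 \<le> HF (a + t *\<^sub>R v) v \<bullet> v"
      using hess[OF p, of v] by (simp add: inner_commute)
  qed
  then show ?thesis
    by (simp add: v_def)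
qed

lemma composite_minimizer_variational_ineq:
  fixes h G :: "'a::real_normed_vector \<Rightarrow> real"
  assumes K: "convex K" "a \<in> K" "b \<in> K" and G: "convex_on K G"
    and dh: "(h has_derivative h') (at a)"
    and min: "\<And>z. z \<in> K \<Longrightarrow> h a + G a \<le> h z + G z"
  shows "G a - G b \<le> h' (b - a)"
proof (rule DERIV_ge_of_increments_ge)
  show "((\<lambda>t. h (a + t *\<^sub>R (b - a))) has_real_derivative h' (b - a)) (at 0)"
    using dh by (intro has_real_derivative_along_line) simp
  fix t :: real assume t: "0 < t" "t \<le> 1"
  have "G (a + t *\<^sub>R (b - a)) \<le> (1 - t) * G a + t * G b"
    using convex_onD[OF G, of t a b] t K by (simp add: algebra_simps)
  moreover have "h a + G a \<le> h (a + t *\<^sub>R (b - a)) + G (a + t *\<^sub>R (b - a))"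
    using t K by (intro min convexD_line) auto
  ultimately show "t * (G a - G b) \<le> h (a + t *\<^sub>R (b - a)) - h (a + 0 *\<^sub>R (b - a))"
    by (simp add: algebra_simps)
qed

lemma gradient_diff_inner_le:
  fixes q :: "'a::real_inner \<Rightarrow> real" and g :: "'a \<Rightarrow> 'a" and H :: "'a \<Rightarrow> 'a \<Rightarrow> 'a"
  assumes S: "open S" and line: "\<And>t. 0 \<le> t \<Longrightarrow> t \<le> 1 \<Longrightarrow> a + t *\<^sub>R (b - a) \<in> S"
    and dq: "\<And>z. z \<in> S \<Longrightarrow> (q has_derivative (\<lambda>h. g z \<bullet> h)) (at z)"
    and dg: "\<And>z. z \<in> S \<Longrightarrow> (g has_derivative H z) (at z)"
    and bd: "\<And>t h. 0 \<le> t \<Longrightarrow> t \<le> 1 \<Longrightarrow> \<bar>h \<bullet> H (a + t *\<^sub>R (b - a)) h\<bar> \<le> D * (norm h)\<^sup>2"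
    and s: "0 < s"
  shows "v \<bullet> (g b - g a) \<le> D / 2 * (s * (norm v)\<^sup>2 + (norm (b - a))\<^sup>2 / s)"
proof -
  define \<rho> where "\<rho> t = v \<bullet> g (a + t *\<^sub>R (b - a))" for t
  have "(\<rho> has_real_derivative v \<bullet> H (a + t *\<^sub>R (b - a)) (b - a)) (at t)" if "0 \<le> t" "t \<le> 1" for t
  proof -
    have "((\<lambda>u. v \<bullet> g u) has_derivative (\<lambda>h. v \<bullet> H (a + t *\<^sub>R (b - a)) h)) (at (a + t *\<^sub>R (b - a)))"
      using dg[OF line[OF that]] by (auto intro!: derivative_eq_intros)
    then show ?thesis
      unfolding \<rho>_def by (rule has_real_derivative_along_line)
  qed
  then obtain \<xi> where \<xi>: "0 < \<xi>" "\<xi> < 1"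
    and mvt: "\<rho> 1 - \<rho> 0 = (1 - 0) * (v \<bullet> H (a + \<xi> *\<^sub>R (b - a)) (b - a))"
    using MVT2[OF zero_less_one, of \<rho> "\<lambda>t. v \<bullet> H (a + t *\<^sub>R (b - a)) (b - a)"] by auto
  define p where "p = a + \<xi> *\<^sub>R (b - a)"
  have p: "p \<in> S"
    using line \<xi> by (simp add: p_def)
  have lin: "linear (H p)"
    using dg[OF p] has_derivative_linear by blast
  have sym: "u \<bullet> H p w = w \<bullet> H p u" for u w
    by (rule hessian_symmetric[OF S p dq dg[OF p]])
  have "v \<bullet> (g b - g a) = v \<bullet> H p (b - a)"
    using mvt by (simp add: \<rho>_def p_def inner_diff_right)
  also have "\<dots> \<le> D / 2 * (s * (norm v)\<^sup>2 + (norm (b - a))\<^sup>2 / s)"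
    using \<xi> bd by (intro polarization_bound_scaled[OF lin sym _ s]) (simp add: p_def)
  finally show ?thesis .
qed

lemma abs_le_of_two_sided_bound:
  fixes x c l u D :: real
  assumes "l * c \<le> x" "x \<le> u * c" "\<bar>l\<bar> \<le> D" "\<bar>u\<bar> \<le> D" "0 \<le> c"
  shows "\<bar>x\<bar> \<le> D * c"
proof -
  have "- D * c \<le> l * c" "u * c \<le> D * c"
    using assms mult_right_mono[of "- D" l c] mult_right_mono[of u D c] by auto
  with assms show ?thesis
    by linarith
qed

text \<open>Here w is an agent's current iterate, xh the minimizer of its surrogate ft (taken at w),
  corrected by the tracked gradient y, and xs an arbitrary point of K.\<close>

lemma surrogate_minimizer_gap:
  fixes F G ft :: "'a::real_inner \<Rightarrow> real" and gF gft :: "'a \<Rightarrow> 'a"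
    and HF Hft :: "'a \<Rightarrow> 'a \<Rightarrow> 'a"
  assumes S: "open S" "K \<subseteq> S" and K: "convex K"
    and in_K: "w \<in> K" "xh \<in> K" "xs \<in> K"
    and dF: "\<And>z. z \<in> S \<Longrightarrow> (F has_derivative (\<lambda>h. gF z \<bullet> h)) (at z)"
    and dgF: "\<And>z. z \<in> S \<Longrightarrow> (gF has_derivative HF z) (at z)"
    and dft: "\<And>z. z \<in> S \<Longrightarrow> (ft has_derivative (\<lambda>h. gft z \<bullet> h)) (at z)"
    and dgft: "\<And>z. z \<in> S \<Longrightarrow> (gft has_derivative Hft z) (at z)"
    and hessF: "\<And>z h. z \<in> K \<Longrightarrow> \<mu> * (norm h)\<^sup>2 \<le> h \<bullet> HF z h"
    and hess_gap: "\<And>z h. z \<in> K \<Longrightarrow> \<bar>h \<bullet> Hft z h - h \<bullet> HF z h\<bar> \<le> D * (norm h)\<^sup>2"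
    and G: "convex_on K G" and gw: "gft w = gw"
    and min: "\<And>z. z \<in> K \<Longrightarrow> ft xh + (y - gw) \<bullet> (xh - w) + G xh \<le> ft z + (y - gw) \<bullet> (z - w) + G z"
    and \<mu>: "0 < \<mu>" and D: "0 < D"
  shows "F xh + G xh - (F xs + G xs) \<le> (D\<^sup>2 * (norm (xh - w))\<^sup>2 + (norm (gF w - y))\<^sup>2) / \<mu>"
proof -
  define v where "v = xs - xh"
  define \<delta> where "\<delta> = gF w - y"
  have S_mem: "z \<in> S" if "z \<in> K" for z
    using that S by auto
  have first_order: "G xh - G xs \<le> (gft xh + (y - gft w)) \<bullet> v"
    unfolding v_def gw
  proof (rule composite_minimizer_variational_ineq[OF K in_K(2,3) G, of "\<lambda>u. ft u + (y - gw) \<bullet> (u - w)"])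
    show "((\<lambda>u. ft u + (y - gw) \<bullet> (u - w)) has_derivative (\<lambda>h. (gft xh + (y - gw)) \<bullet> h)) (at xh)"
      using dft[OF S_mem[OF in_K(2)]]
      by (auto intro!: derivative_eq_intros simp: inner_add_left inner_add_right inner_commute)
  qed (use min in auto)
  have strong_convexity: "F xh + gF xh \<bullet> v + \<mu> / 2 * (norm v)\<^sup>2 \<le> F xs"
    unfolding v_def
    by (rule hessian_ge_imp_quadratic_lower_bound[where S = K])
      (use K in_K hessF S_mem dF dgF convexD_line in auto)
  have gradient_gap: "v \<bullet> ((gft xh - gF xh) - (gft w - gF w)) \<le> \<mu> / 4 * (norm v)\<^sup>2 + D\<^sup>2 / \<mu> * (norm (xh - w))\<^sup>2"
  proof -
    have "v \<bullet> ((gft xh - gF xh) - (gft w - gF w))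
        \<le> D / 2 * (\<mu> / (2 * D) * (norm v)\<^sup>2 + (norm (xh - w))\<^sup>2 / (\<mu> / (2 * D)))"
    proof (rule gradient_diff_inner_le[OF S(1), of w xh "\<lambda>u. ft u - F u"])
      show "\<And>z. z \<in> S \<Longrightarrow> ((\<lambda>u. ft u - F u) has_derivative (\<lambda>h. (gft z - gF z) \<bullet> h)) (at z)"
        using dft dF by (auto intro!: derivative_eq_intros simp: inner_diff_left)
      show "\<And>z. z \<in> S \<Longrightarrow> ((\<lambda>u. gft u - gF u) has_derivative (\<lambda>h. Hft z h - HF z h)) (at z)"
        using dgft dgF by (auto intro!: derivative_eq_intros)
      show "\<bar>h \<bullet> (Hft (w + t *\<^sub>R (xh - w)) h - HF (w + t *\<^sub>R (xh - w)) h)\<bar> \<le> D * (norm h)\<^sup>2"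
        if "0 \<le> t" "t \<le> 1" for t h
        using hess_gap[OF convexD_line[OF K in_K(1,2) that]] by (simp add: inner_diff_right)
    qed (use K in_K S_mem convexD_line[OF K in_K(1,2)] \<mu> D in auto)
    also have "\<dots> = \<mu> / 4 * (norm v)\<^sup>2 + D\<^sup>2 / \<mu> * (norm (xh - w))\<^sup>2"
      using \<mu> D by (simp add: field_simps power2_eq_square)
    finally show ?thesis .
  qed
  have tracking_error: "v \<bullet> - \<delta> \<le> \<mu> / 4 * (norm v)\<^sup>2 + (norm \<delta>)\<^sup>2 / \<mu>"
    using inner_le_young[of "\<mu> / 2" v "- \<delta>"] \<mu> by simp
  have "(gft xh + (y - gft w)) \<bullet> v - gF xh \<bullet> v = v \<bullet> ((gft xh - gF xh) - (gft w - gF w)) + v \<bullet> - \<delta>"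
    by (simp add: \<delta>_def inner_add_left inner_add_right inner_diff_left inner_diff_right inner_commute)
  with first_order strong_convexity gradient_gap tracking_error show ?thesis
    unfolding \<delta>_def add_divide_distrib by (simp add: mult.commute)
qed

lemma convex_on_sum_fun:
  fixes f :: "'i \<Rightarrow> 'a::real_vector \<Rightarrow> real"
  assumes "finite I" "convex S" "\<And>i. i \<in> I \<Longrightarrow> convex_on S (f i)"
  shows "convex_on S (\<lambda>x. \<Sum>i\<in>I. f i x)"
  using assms by (induction I rule: finite_induct) (auto simp: convex_on_const)

lemma sum_convex_on_doubly_stochastic_le:
  fixes U :: "'a::real_vector \<Rightarrow> real" and m :: nat
  assumes U: "convex_on K U"
    and W: "\<And>i j. i < m \<Longrightarrow> j < m \<Longrightarrow> 0 \<le> W i j"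
    and rows: "\<And>i. i < m \<Longrightarrow> (\<Sum>j<m. W i j) = 1"
    and cols: "\<And>j. j < m \<Longrightarrow> (\<Sum>i<m. W i j) = 1"
    and z: "\<And>j. j < m \<Longrightarrow> z j \<in> K"
  shows "(\<Sum>i<m. U (\<Sum>j<m. W i j *\<^sub>R z j)) \<le> (\<Sum>j<m. U (z j))"
proof -
  have "(\<Sum>i<m. U (\<Sum>j<m. W i j *\<^sub>R z j)) \<le> (\<Sum>i<m. \<Sum>j<m. W i j * U (z j))"
    by (rule sum_mono, rule convex_on_sum[OF _ _ U]) (use rows W z in auto)
  also have "\<dots> = (\<Sum>j<m. (\<Sum>i<m. W i j) * U (z j))"
    by (subst sum.swap) (simp add: sum_distrib_right)
  also have "\<dots> = (\<Sum>j<m. U (z j))"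
    using cols by simp
  finally show ?thesis .
qed

lemma mixing_iterates_mem:
  fixes x xh :: "nat \<Rightarrow> nat \<Rightarrow> 'a::real_vector" and m :: nat
  assumes K: "convex K"
    and W: "\<And>i j. i < m \<Longrightarrow> j < m \<Longrightarrow> 0 \<le> W i j"
    and rows: "\<And>i. i < m \<Longrightarrow> (\<Sum>j<m. W i j) = 1"
    and \<alpha>: "0 \<le> \<alpha>" "\<alpha> \<le> 1"
    and x0: "\<And>i. i < m \<Longrightarrow> x 0 i \<in> K"
    and xh: "\<And>\<nu> i. i < m \<Longrightarrow> xh \<nu> i \<in> K"
    and step: "\<And>\<nu> i. i < m \<Longrightarrow> x (Suc \<nu>) i = (\<Sum>j<m. W i j *\<^sub>R (x \<nu> j + \<alpha> *\<^sub>R (xh \<nu> j - x \<nu> j)))"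
  shows "i < m \<Longrightarrow> x \<nu> i \<in> K"
proof (induction \<nu> arbitrary: i)
  case 0
  then show ?case by (rule x0)
next
  case (Suc \<nu>)
  have "(\<Sum>j<m. W i j *\<^sub>R (x \<nu> j + \<alpha> *\<^sub>R (xh \<nu> j - x \<nu> j))) \<in> K"
    using Suc rows W \<alpha> xh by (intro convex_sum[OF _ K] convexD_line[OF K]) auto
  then show ?case
    using step[OF Suc.prems] by simp
qed

lemma doubly_stochastic_descent:
  fixes U :: "'a::real_vector \<Rightarrow> real" and m :: nat
    and x xh x' :: "nat \<Rightarrow> 'a" and e r :: "nat \<Rightarrow> real"
  assumes U: "convex_on K U" and K: "convex K"
    and W: "\<And>i j. i < m \<Longrightarrow> j < m \<Longrightarrow> 0 \<le> W i j"
    and rows: "\<And>i. i < m \<Longrightarrow> (\<Sum>j<m. W i j) = 1"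
    and cols: "\<And>j. j < m \<Longrightarrow> (\<Sum>i<m. W i j) = 1"
    and \<alpha>: "0 < \<alpha>" "\<alpha> \<le> 1"
    and in_K: "\<And>j. j < m \<Longrightarrow> x j \<in> K" "\<And>j. j < m \<Longrightarrow> xh j \<in> K"
    and x': "\<And>i. i < m \<Longrightarrow> x' i = (\<Sum>j<m. W i j *\<^sub>R (x j + \<alpha> *\<^sub>R (xh j - x j)))"
    and gap: "\<And>j. j < m \<Longrightarrow> U (xh j) - u \<le> (D\<^sup>2 * e j + r j) / \<mu>"
    and \<mu>: "0 < \<mu>" and D: "0 < D"
  shows "\<mu> / D\<^sup>2 * ((\<Sum>i<m. U (x' i) - u) - (1 - \<alpha>) * (\<Sum>i<m. U (x i) - u) - \<alpha> / \<mu> * (\<Sum>i<m. r i))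
    \<le> \<alpha> * (\<Sum>i<m. e i)"
proof -
  have "(\<Sum>i<m. U (x' i)) \<le> (\<Sum>j<m. U (x j + \<alpha> *\<^sub>R (xh j - x j)))"
    using x' sum_convex_on_doubly_stochastic_le[OF U W rows cols, of "\<lambda>j. x j + \<alpha> *\<^sub>R (xh j - x j)"]
      in_K \<alpha> by (simp add: convexD_line[OF K])
  also have "\<dots> \<le> (\<Sum>j<m. (1 - \<alpha>) * U (x j) + \<alpha> * U (xh j))"
  proof (rule sum_mono)
    fix j assume "j \<in> {..<m}"
    then show "U (x j + \<alpha> *\<^sub>R (xh j - x j)) \<le> (1 - \<alpha>) * U (x j) + \<alpha> * U (xh j)"
      using convex_onD[OF U, of \<alpha> "x j" "xh j"] in_K \<alpha> by (simp add: algebra_simps)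
  qed
  finally have mixing: "(\<Sum>i<m. U (x' i) - u) \<le> (1 - \<alpha>) * (\<Sum>i<m. U (x i) - u) + \<alpha> * (\<Sum>i<m. U (xh i) - u)"
    by (simp add: sum_subtractf sum.distrib sum_distrib_left algebra_simps)
  have "(\<Sum>i<m. U (xh i) - u) \<le> (\<Sum>i<m. (D\<^sup>2 * e i + r i) / \<mu>)"
    using gap by (intro sum_mono) auto
  also have "\<dots> = D\<^sup>2 / \<mu> * (\<Sum>i<m. e i) + (\<Sum>i<m. r i) / \<mu>"
    by (simp add: sum.distrib sum_distrib_left add_divide_distrib flip: sum_divide_distrib)
  finally have "\<alpha> * (\<Sum>i<m. U (xh i) - u) \<le> \<alpha> * (D\<^sup>2 / \<mu> * (\<Sum>i<m. e i) + (\<Sum>i<m. r i) / \<mu>)"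
    using \<alpha> by (simp add: mult_left_mono)
  with mixing have "(\<Sum>i<m. U (x' i) - u) - (1 - \<alpha>) * (\<Sum>i<m. U (x i) - u) - \<alpha> / \<mu> * (\<Sum>i<m. r i)
      \<le> D\<^sup>2 / \<mu> * (\<alpha> * (\<Sum>i<m. e i))"
    by (simp add: algebra_simps)
  then have "\<mu> / D\<^sup>2 * ((\<Sum>i<m. U (x' i) - u) - (1 - \<alpha>) * (\<Sum>i<m. U (x i) - u) - \<alpha> / \<mu> * (\<Sum>i<m. r i))
      \<le> \<mu> / D\<^sup>2 * (D\<^sup>2 / \<mu> * (\<alpha> * (\<Sum>i<m. e i)))"
    using \<mu> by (intro mult_left_mono) auto
  then show ?thesis
    using \<mu> D by simp
qed

theorem lemma3p2:
  fixes m :: nat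
    and K Oset :: "'a::euclidean_space set"
    and f :: "nat \<Rightarrow> 'a \<Rightarrow> real" and gf :: "nat \<Rightarrow> 'a \<Rightarrow> 'a" and Hf :: "nat \<Rightarrow> 'a \<Rightarrow> 'a \<Rightarrow> 'a"
    and G :: "'a \<Rightarrow> real" and \<mu> L :: real and xstar :: 'a
    and E :: "(nat \<times> nat) set" and W :: "nat \<Rightarrow> nat \<Rightarrow> real"
    and ft :: "nat \<Rightarrow> 'a \<Rightarrow> 'a \<Rightarrow> real" and gft :: "nat \<Rightarrow> 'a \<Rightarrow> 'a \<Rightarrow> 'a"
    and Hft :: "nat \<Rightarrow> 'a \<Rightarrow> 'a \<Rightarrow> 'a \<Rightarrow> 'a"
    and Dl Du :: "nat \<Rightarrow> real" and Dmax :: real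
    and \<alpha> :: real and x y xhat :: "nat \<Rightarrow> nat \<Rightarrow> 'a"
  assumes m_pos: "0 < m"
    \<comment> \<open>(A)\<close>
    and K_ne: "K \<noteq> {}" and K_closed: "closed K" and K_convex: "convex K"
    and O_open: "open Oset" and K_sub_O: "K \<subseteq> Oset"
    and f_convex: "\<forall>i<m. convex_on Oset (f i)"
    and f_grad: "\<forall>i<m. \<forall>z\<in>Oset. (f i has_derivative (\<lambda>h. gf i z \<bullet> h)) (at z)"
    and f_hess: "\<forall>i<m. \<forall>z\<in>Oset. (gf i has_derivative Hf i z) (at z)"
    and mu_pos: "0 < \<mu>"
    and hess_bounds: "\<forall>z\<in>K. \<forall>h. \<mu> * (norm h)\<^sup>2 \<le> h \<bullet> ((1 / real m) *\<^sub>R (\<Sum>i<m. Hf i z h))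
                          \<and> h \<bullet> ((1 / real m) *\<^sub>R (\<Sum>i<m. Hf i z h)) \<le> L * (norm h)\<^sup>2"
    and G_convex: "convex_on K G"
    and xstar_K: "xstar \<in> K"
    and xstar_unique_min: "\<forall>z\<in>K. z \<noteq> xstar \<longrightarrow>
          (1 / real m) * (\<Sum>i<m. f i xstar) + G xstar < (1 / real m) * (\<Sum>i<m. f i z) + G z"
    \<comment> \<open>(B)\<close>
    and E_sub: "E \<subseteq> {..<m} \<times> {..<m}" and E_sym: "sym E"
    and E_conn: "\<forall>i<m. \<forall>j<m. (i, j) \<in> E\<^sup>*"
    \<comment> \<open>(W)\<close>
    and W_diag: "\<forall>i<m. 0 < W i i"
    and W_edge: "\<forall>i<m. \<forall>j<m. i \<noteq> j \<longrightarrow> ((i, j) \<in> E \<longrightarrow> 0 < W i j) \<and> ((i, j) \<notin> E \<longrightarrow> W i j = 0)"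
    and W_row: "\<forall>i<m. (\<Sum>j<m. W i j) = 1"
    and W_col: "\<forall>j<m. (\<Sum>i<m. W i j) = 1"
    \<comment> \<open>(C)\<close>
    and ft_C2: "\<forall>i<m. C2_on (Oset \<times> Oset) (\<lambda>p. ft i (fst p) (snd p))"
    and ft_grad: "\<forall>i<m. \<forall>z\<in>Oset. \<forall>w\<in>Oset. ((\<lambda>u. ft i u w) has_derivative (\<lambda>h. gft i z w \<bullet> h)) (at z)"
    and ft_hess: "\<forall>i<m. \<forall>z\<in>Oset. \<forall>w\<in>Oset. ((\<lambda>u. gft i u w) has_derivative Hft i z w) (at z)"
    and ft_consistent: "\<forall>i<m. \<forall>z\<in>K. gft i z z = gf i z"
    and ft_lipschitz: "\<forall>i<m. \<forall>w\<in>K. \<exists>C. C-lipschitz_on K (\<lambda>u. gft i u w)"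
    and ft_strongly_convex: "\<forall>i<m. \<forall>w\<in>K. strongly_convex_on K (\<lambda>u. ft i u w)"
    and D_le: "\<forall>i<m. Dl i \<le> Du i"
    and D_bounds: "\<forall>i<m. \<forall>z\<in>K. \<forall>w\<in>K. \<forall>h.
          Dl i * (norm h)\<^sup>2 \<le> h \<bullet> Hft i z w h - h \<bullet> ((1 / real m) *\<^sub>R (\<Sum>j<m. Hf j z h))
        \<and> h \<bullet> Hft i z w h - h \<bullet> ((1 / real m) *\<^sub>R (\<Sum>j<m. Hf j z h)) \<le> Du i * (norm h)\<^sup>2"
    and Dmax_def: "Dmax = Max ((\<lambda>i. max \<bar>Dl i\<bar> \<bar>Du i\<bar>) ` {..<m})"
    and Dmax_pos: "0 < Dmax"
    \<comment> \<open>SONATA iterates\<close>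
    and alpha_pos: "0 < \<alpha>" and alpha_le1: "\<alpha> \<le> 1"
    and x0: "\<forall>i<m. x 0 i \<in> K"
    and y0: "\<forall>i<m. y 0 i = gf i (x 0 i)"
    and xhat_K: "\<forall>\<nu>. \<forall>i<m. xhat \<nu> i \<in> K"
    and xhat_min: "\<forall>\<nu>. \<forall>i<m. \<forall>z\<in>K.
          ft i (xhat \<nu> i) (x \<nu> i) + (y \<nu> i - gf i (x \<nu> i)) \<bullet> (xhat \<nu> i - x \<nu> i) + G (xhat \<nu> i)
        \<le> ft i z (x \<nu> i) + (y \<nu> i - gf i (x \<nu> i)) \<bullet> (z - x \<nu> i) + G z"
    and x_step: "\<forall>\<nu>. \<forall>i<m. x (Suc \<nu>) i = (\<Sum>j<m. W i j *\<^sub>R (x \<nu> j + \<alpha> *\<^sub>R (xhat \<nu> j - x \<nu> j)))"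
    and y_step: "\<forall>\<nu>. \<forall>i<m. y (Suc \<nu>) i = (\<Sum>j<m. W i j *\<^sub>R (y \<nu> j + gf j (x (Suc \<nu>) j) - gf j (x \<nu> j)))"
  shows "\<forall>\<nu>. \<alpha> * (\<Sum>i<m. (norm (xhat \<nu> i - x \<nu> i))\<^sup>2)
           \<ge> \<mu> / Dmax\<^sup>2 *
             ((\<Sum>i<m. ((1 / real m) * (\<Sum>j<m. f j (x (Suc \<nu>) i)) + G (x (Suc \<nu>) i))
                        - ((1 / real m) * (\<Sum>j<m. f j xstar) + G xstar))
              - (1 - \<alpha>) * (\<Sum>i<m. ((1 / real m) * (\<Sum>j<m. f j (x \<nu> i)) + G (x \<nu> i))
                        - ((1 / real m) * (\<Sum>j<m. f j xstar) + G xstar))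
              - \<alpha> / \<mu> * (\<Sum>i<m. (norm ((1 / real m) *\<^sub>R (\<Sum>j<m. gf j (x \<nu> i)) - y \<nu> i))\<^sup>2))"
proof -
  define F where "F z = (1 / real m) * (\<Sum>j<m. f j z)" for z
  define gF where "gF z = (1 / real m) *\<^sub>R (\<Sum>j<m. gf j z)" for z
  define HF where "HF z h = (1 / real m) *\<^sub>R (\<Sum>j<m. Hf j z h)" for z h
  define U where "U z = F z + G z" for z
  have dF: "(F has_derivative (\<lambda>h. gF z \<bullet> h)) (at z)" if "z \<in> Oset" for z
    using f_grad that m_pos unfolding F_def gF_def
    by (auto intro!: derivative_eq_intros simp: inner_sum_left)
  have dgF: "(gF has_derivative HF z) (at z)" if "z \<in> Oset" for z
    using f_hess that m_pos unfolding gF_def HF_def[abs_def]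
    by (auto intro!: derivative_eq_intros)
  have W_nonneg: "0 \<le> W i j" if "i < m" "j < m" for i j
    using W_diag W_edge that by (cases "i = j"; cases "(i, j) \<in> E") (auto intro: less_imp_le)
  have x_K: "x \<nu> i \<in> K" if "i < m" for \<nu> i
    using mixing_iterates_mem[where x = x and xh = xhat and \<alpha> = \<alpha> and W = W and m = m, OF K_convex]
      that W_nonneg W_row alpha_pos alpha_le1 x0 xhat_K x_step by simp
  have U_convex: "convex_on K U"
    unfolding U_def[abs_def] F_def
    using f_convex K_sub_O K_convex G_convex
    by (intro convex_on_add convex_on_cmul convex_on_sum_fun) (auto intro: convex_on_subset)
  have Dmax_ge: "\<bar>Dl i\<bar> \<le> Dmax \<and> \<bar>Du i\<bar> \<le> Dmax" if "i < m" for i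
    using Max_ge[of "(\<lambda>i. max \<bar>Dl i\<bar> \<bar>Du i\<bar>) ` {..<m}"] that unfolding Dmax_def by fastforce
  have hess_gap: "\<bar>h \<bullet> Hft i z w h - h \<bullet> HF z h\<bar> \<le> Dmax * (norm h)\<^sup>2" if "i < m" "z \<in> K" "w \<in> K" for i z w h
    using D_bounds Dmax_ge that by (intro abs_le_of_two_sided_bound[of "Dl i" _ _ "Du i"]) (auto simp: HF_def)
  have gap: "U (xhat \<nu> i) - U xstar
      \<le> (Dmax\<^sup>2 * (norm (xhat \<nu> i - x \<nu> i))\<^sup>2 + (norm (gF (x \<nu> i) - y \<nu> i))\<^sup>2) / \<mu>"
    if i: "i < m" for \<nu> i
    unfolding U_def
    by (rule surrogate_minimizer_gap[OF O_open K_sub_O K_convex x_K[OF i] xhat_K[rule_format, OF i] xstar_K dF dgF,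
          where ft = "\<lambda>u. ft i u (x \<nu> i)" and gft = "\<lambda>u. gft i u (x \<nu> i)" and Hft = "\<lambda>u. Hft i u (x \<nu> i)"])
      (use i x_K[OF i] subsetD[OF K_sub_O x_K[OF i]] ft_grad ft_hess hess_bounds hess_gap ft_consistent
          G_convex xhat_min mu_pos Dmax_pos in \<open>auto simp: HF_def\<close>)
  show ?thesis
    using doubly_stochastic_descent[OF U_convex K_convex W_nonneg W_row[rule_format] W_col[rule_format]
        alpha_pos alpha_le1 x_K xhat_K[rule_format] x_step[rule_format] gap mu_pos Dmax_pos]
    by (simp add: U_def F_def gF_def)
qed

end
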